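(* (a) Fix an input distribution $p\in\Delta_m$ and define, for $P$ in the set $\Delta_{n\times m}$ of $n\times m$ nonnegative matrices with entries summing to $1$, $$I_c(P)=\sum_{j=1}^m\sum_{i=1}^nP_{ij}\log\Big(\frac{P_{ij}}{\sum_{k=1}^m p_jP_{ik}}\Big).$$ Then $I_c$ is $1$-smooth relative to the negative Shannon entropy $-H$ on $\Delta_{n\times m}$. (b) Fix an input state $\rho_A\in\mathcal{D}(\mathcal{H}_A)$ and define, for $\rho_{BR}\in\mathcal{D}(\mathcal{H}_B\otimes\mathcal{H}_R)$, $$I_q(\rho_{BR})=S(\rho_A)+S(\operatorname{tr}_R(\rho_{BR}))-S(\rho_{BR}).$$ Then $I_q$ is $1$-smooth relative to the negative von Neumann entropy $-S$ on $\mathcal{D}(\mathcal{H}_B\otimes\mathcal{H}_R)$.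
   Context: $H(x)=-\sum_i x_i\log x_i$ (applied entrywise to matrices); $S(\rho)=-\operatorname{tr}[\rho\log\rho]$; $\mathcal{D}(\cdot)$ denotes density matrices and $\operatorname{tr}_R$ the partial trace over $\mathcal{H}_R$. A function $f$ is $L$-smooth relative to a Legendre function $\varphi$ on a convex set $\mathcal{C}$ if $L\varphi-f$ is convex on the relative interior of $\mathcal{C}$. *)

theory Defs
  imports "HOL-Analysis.Analysis"
begin

definition rel_smooth :: "real \<Rightarrow> ('a::real_normed_vector \<Rightarrow> real) \<Rightarrow> ('a \<Rightarrow> real) \<Rightarrow> 'a set \<Rightarrow> bool"
  where "rel_smooth L f \<phi> C \<longleftrightarrow> convex_on (rel_interior C) (\<lambda>x. L * \<phi> x - f x)"

definition prob_simplex :: "(real^'m) set"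
  where "prob_simplex = {p. (\<forall>j. 0 \<le> p $ j) \<and> (\<Sum>j\<in>UNIV. p $ j) = 1}"

text \<open>n x m nonnegative matrices with entries summing to 1 (row index i :: 'n, column j :: 'm).\<close>
definition mat_simplex :: "(real^'m^'n) set"
  where "mat_simplex = {P. (\<forall>i j. 0 \<le> P $ i $ j) \<and> (\<Sum>i\<in>UNIV. \<Sum>j\<in>UNIV. P $ i $ j) = 1}"

text \<open>Shannon entropy applied entrywise (0 log 0 = 0 holds automatically since 0 * _ = 0).\<close>
definition shannon_H :: "real^'m^'n \<Rightarrow> real"
  where "shannon_H P = - (\<Sum>i\<in>UNIV. \<Sum>j\<in>UNIV. P $ i $ j * ln (P $ i $ j))"

definition I_c :: "real^'m \<Rightarrow> real^'m^'n \<Rightarrow> real"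
  where "I_c p P = (\<Sum>j\<in>UNIV. \<Sum>i\<in>UNIV.
            P $ i $ j * ln (P $ i $ j / (\<Sum>k\<in>UNIV. p $ j * P $ i $ k)))"

definition adjoint_mat :: "complex^'n^'n \<Rightarrow> complex^'n^'n"
  where "adjoint_mat A = (\<chi> i j. cnj (A $ j $ i))"

definition hermitian_mat :: "complex^'n^'n \<Rightarrow> bool"
  where "hermitian_mat A \<longleftrightarrow> adjoint_mat A = A"

definition unitary_mat :: "complex^'n^'n \<Rightarrow> bool"
  where "unitary_mat U \<longleftrightarrow> U ** adjoint_mat U = mat 1 \<and> adjoint_mat U ** U = mat 1"

definition psd_mat :: "complex^'n^'n \<Rightarrow> bool"
  where "psd_mat A \<longleftrightarrow> hermitian_mat A \<and>
           (\<forall>x::complex^'n. 0 \<le> Re (\<Sum>i\<in>UNIV. cnj (x $ i) * (A *v x) $ i))"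

definition density_mats :: "(complex^'n^'n) set"
  where "density_mats = {\<rho>. psd_mat \<rho> \<and> trace \<rho> = 1}"

definition diag_mat :: "('n \<Rightarrow> real) \<Rightarrow> complex^'n^'n"
  where "diag_mat ev = (\<chi> i j. if i = j then complex_of_real (ev i) else 0)"

definition mat_fun :: "(real \<Rightarrow> real) \<Rightarrow> complex^'n^'n \<Rightarrow> complex^'n^'n"
  where "mat_fun f A =
     (let (U, ev) = (SOME (U, ev). unitary_mat U \<and> A = U ** diag_mat ev ** adjoint_mat U)
      in U ** diag_mat (f \<circ> ev) ** adjoint_mat U)"

text \<open>von Neumann entropy S(rho) = - tr[rho log rho], with 0 log 0 = 0, i.e.
  rho log rho := (x \<mapsto> x ln x)(rho).\<close>
definition vN_S :: "complex^'n^'n \<Rightarrow> real"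
  where "vN_S \<rho> = - Re (trace (mat_fun (\<lambda>x. x * ln x) \<rho>))"

text \<open>Partial trace over H_R, with H_B \<otimes> H_R indexed by 'b \<times> 'r.\<close>
definition ptrace_R :: "complex^('b::finite \<times> 'r::finite)^('b \<times> 'r) \<Rightarrow> complex^'b^'b"
  where "ptrace_R \<rho> = (\<chi> b b'. \<Sum>r\<in>UNIV. \<rho> $ (b, r) $ (b', r))"

definition I_q :: "complex^'a^'a \<Rightarrow> complex^('b::finite \<times> 'r::finite)^('b \<times> 'r) \<Rightarrow> real"
  where "I_q \<rho>A \<rho> = vN_S \<rho>A + vN_S (ptrace_R \<rho>) - vN_S \<rho>"

end

theory Submission
  imports Defs
begin

(*
  Both parts follow from convexity of phi - I (phi = -H, resp. -S) on the whole state
  space, which is stronger than convexity on its relative interior.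

  Classical part: with row sums r_i, -H(P) - I_c(P) = sum_i (r_i ln r_i + sum_j c_ij), where
  c_ij = P_ij ln p_j if p_j > 0 and c_ij = P_ij ln (P_ij / r_i) if p_j = 0. The terms
  r_i ln r_i are convex, the c_ij are linear or, as the perspective (a, b) |-> b eta(a / b)
  of eta(x) = x ln x evaluated at the linear map P |-> (P_ij, r_i), jointly convex.

  Quantum part: -S(rho) - I_q(rho) = -S(rho_A) - S(tr_R rho), and tr_R is linear and
  preserves positivity, so it suffices that S is concave on positive semidefinite
  matrices. If (v_j) is an eigenbasis of rho = u sigma + v tau, its eigenvalues are
  u <v_j, sigma v_j> + v <v_j, tau v_j>, so convexity of eta splits sum_j eta(mu_j).
  The diagonal of sigma in any orthonormal basis arises from its eigenvalues through the
  doubly stochastic matrix |<e_i, v_j>|^2 (e_i an eigenbasis of sigma), hence by Jensen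
  sum_j eta(<v_j, sigma v_j>) <= -S(sigma). The spectral theorem behind all of this is
  proved by maximising the Rayleigh quotient on invariant subspaces.
*)

section \<open>Convex functions\<close>

lemma convex_on_cong:
  assumes "S = T" "\<And>x. x \<in> T \<Longrightarrow> f x = g x"
  shows "convex_on S f \<longleftrightarrow> convex_on T g"
  using assms by (auto simp: convex_on_def convex_def)

lemma convex_on_finite_sum:
  assumes "finite I" "convex S" "\<And>i. i \<in> I \<Longrightarrow> convex_on S (f i)"
  shows "convex_on S (\<lambda>x. \<Sum>i\<in>I. f i x)"
  using assms by (induction I rule: finite_induct) (auto simp: convex_on_const)

lemma convex_on_linear: "linear f \<Longrightarrow> convex S \<Longrightarrow> convex_on S f"
  by (simp add: convex_on_def linear_add linear_cmul)

lemma convex_on_compose_linear: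
  assumes "convex_on T f" "linear g" "convex S" "g ` S \<subseteq> T"
  shows "convex_on S (\<lambda>x. f (g x))"
  using assms by (auto simp: convex_on_def linear_add linear_cmul image_subset_iff)

lemma rel_smooth_if_convex_on:
  fixes C :: "'a::euclidean_space set"
  assumes "convex_on S (\<lambda>x. L * \<phi> x - f x)" "C \<subseteq> S" "convex C"
  shows "rel_smooth L f \<phi> C"
  unfolding rel_smooth_def
  using convex_on_subset[OF assms(1)] rel_interior_subset[of C] assms(2)
    convex_rel_interior[OF assms(3)] by blast

lemma convex_on_xlnx: "convex_on {0..} (\<lambda>x::real. x * ln x)"
proof -
  have pos: "convex_on {0<..} (\<lambda>x::real. x * ln x)"
    by (rule f''_ge0_imp_convex[where f' = "\<lambda>x. ln x + 1" and f'' = "\<lambda>x. 1 / x"])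
      (auto intro!: derivative_eq_intros)
  show ?thesis
  proof (rule convex_on_linorderI)
    fix t x y :: real
    assume t: "0 < t" "t < 1" and xy: "x \<in> {0..}" "y \<in> {0..}" "x < y"
    show "((1 - t) *\<^sub>R x + t *\<^sub>R y) * ln ((1 - t) *\<^sub>R x + t *\<^sub>R y)
        \<le> (1 - t) * (x * ln x) + t * (y * ln y)"
    proof (cases "x = 0")
      case True
      have "ln (t * y) \<le> ln y" using t xy True by simp
      then have "(t * y) * ln (t * y) \<le> (t * y) * ln y"
        by (rule mult_left_mono) (use t xy in simp)
      then show ?thesis using True by (simp add: mult.assoc)
    next
      case False
      then show ?thesis using xy t by (intro convex_onD[OF pos]) auto
    qed
  qed simp
qed

lemma xlnx_convex_combination:
  fixes x y u v :: real
  assumes "0 \<le> x" "0 \<le> y" "0 \<le> u" "0 \<le> v" "u + v = 1"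
  shows "(u * x + v * y) * ln (u * x + v * y) \<le> u * (x * ln x) + v * (y * ln y)"
  using convex_on_xlnx assms unfolding convex_on_def by simp

lemma log_sum_inequality_weighted:
  fixes a1 a2 b1 b2 u v :: real
  assumes a: "0 \<le> a1" "a1 \<le> b1" "0 \<le> a2" "a2 \<le> b2" and u: "0 \<le> u" and v: "0 \<le> v"
  shows "(u * a1 + v * a2) * ln ((u * a1 + v * a2) / (u * b1 + v * b2))
           \<le> u * (a1 * ln (a1 / b1)) + v * (a2 * ln (a2 / b2))"
proof (cases "u * b1 + v * b2 = 0")
  case True
  then have "u * b1 = 0" "v * b2 = 0"
    using a u v by (auto simp: add_nonneg_eq_0_iff)
  then have ua: "u * a1 = 0" and va: "v * a2 = 0"
    using a u v by (metis antisym mult_left_mono mult_nonneg_nonneg)+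
  show ?thesis by (simp only: mult.assoc[symmetric] ua va) simp
next
  case False
  define B where "B = u * b1 + v * b2"
  \<comment> \<open>\<open>a ln (a / b)\<close> is the perspective \<open>b \<eta>(a / b)\<close> of \<open>\<eta>(x) = x ln x\<close>.\<close>
  have persp: "(w * b) * (a / b) = w * a" "(w * b) * (a / b * ln (a / b)) = w * (a * ln (a / b))"
    if "0 \<le> a" "a \<le> b" for w a b :: real
    using that by (cases "b = 0"; simp)+
  have "0 \<le> u * b1" "0 \<le> v * b2" using a u v by simp_all
  then have "B > 0" using False by (simp add: B_def)
  have w: "u / B * b1 + v / B * b2 = 1"
    using False by (simp add: B_def flip: add_divide_distrib)
  have "((u / B * b1) * (a1 / b1) + (v / B * b2) * (a2 / b2))
          * ln ((u / B * b1) * (a1 / b1) + (v / B * b2) * (a2 / b2))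
        \<le> (u / B * b1) * (a1 / b1 * ln (a1 / b1)) + (v / B * b2) * (a2 / b2 * ln (a2 / b2))"
    by (rule xlnx_convex_combination) (use a u v \<open>B > 0\<close> w in auto)
  then have "(u / B * a1 + v / B * a2) * ln (u / B * a1 + v / B * a2)
               \<le> u / B * (a1 * ln (a1 / b1)) + v / B * (a2 * ln (a2 / b2))"
    by (simp only: persp[OF a(1,2)] persp[OF a(3,4)])
  then have "(u * a1 + v * a2) * ln ((u * a1 + v * a2) / B) / B
               \<le> (u * (a1 * ln (a1 / b1)) + v * (a2 * ln (a2 / b2))) / B"
    by (simp only: times_divide_eq_left add_divide_distrib[symmetric])
  then show ?thesis using \<open>B > 0\<close> by (simp add: B_def divide_le_cancel)
qed

lemma convex_on_relative_entropy_term: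
  "convex_on {(a, b). 0 \<le> a \<and> a \<le> b} (\<lambda>(a, b). a * ln (a / b))"
  unfolding convex_on_def
proof (intro conjI ballI allI impI)
  show "convex {(a::real, b::real). 0 \<le> a \<and> a \<le> b}"
    by (auto simp: convex_def intro: add_mono mult_left_mono)
  fix z1 z2 :: "real \<times> real" and u v :: real
  assume "z1 \<in> {(a, b). 0 \<le> a \<and> a \<le> b}" "z2 \<in> {(a, b). 0 \<le> a \<and> a \<le> b}"
    and "0 \<le> u" "0 \<le> v"
  then show "(\<lambda>(a, b). a * ln (a / b)) (u *\<^sub>R z1 + v *\<^sub>R z2)
               \<le> u * (\<lambda>(a, b). a * ln (a / b)) z1 + v * (\<lambda>(a, b). a * ln (a / b)) z2"
    by (cases z1; cases z2) (simp add: log_sum_inequality_weighted)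
qed

definition cinner :: "complex^'n \<Rightarrow> complex^'n \<Rightarrow> complex"
  where "cinner x y = (\<Sum>i\<in>UNIV. cnj (x $ i) * y $ i)"

lemma cnj_cinner: "cnj (cinner x y) = cinner y x"
  by (simp add: cinner_def mult.commute)

lemma inner_conv_cinner: "inner x y = Re (cinner x y)"
  by (simp add: inner_vec_def cinner_def inner_complex_def Re_sum algebra_simps)

lemma cinner_zero_right [simp]: "cinner x 0 = 0"
  by (simp add: cinner_def)

lemma cinner_add_right: "cinner x (y + z) = cinner x y + cinner x z"
  by (simp add: cinner_def sum.distrib algebra_simps)

lemma vector_scaleR_component_of_real:
  "(r *\<^sub>R (x::'a::real_algebra_1^'n)) $ i = of_real r * x $ i"
  by (subst vector_scaleR_component) (rule scaleR_conv_of_real)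

lemma cinner_scaleR_right: "cinner x (r *\<^sub>R y) = of_real r * cinner x y"
  by (simp add: cinner_def sum_distrib_left vector_scaleR_component_of_real
      algebra_simps del: vector_scaleR_component)

lemma cinner_scaleR_left: "cinner (r *\<^sub>R x) y = of_real r * cinner x y"
  by (simp add: cinner_def sum_distrib_left vector_scaleR_component_of_real
      algebra_simps del: vector_scaleR_component)

lemma cinner_smult_right: "cinner x (c *s y) = c * cinner x y"
  by (simp add: cinner_def sum_distrib_left algebra_simps)

lemma cinner_self: "cinner x x = of_real ((norm x)\<^sup>2)"
proof -
  have "Im (cinner x x) = 0"
    by (simp add: cinner_def Im_sum algebra_simps)
  then show ?thesis
    by (simp add: complex_eq_iff power2_norm_eq_inner inner_conv_cinner)
qed

lemma cinner_adjoint: "cinner x (M *v y) = cinner (adjoint_mat M *v x) y"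
proof -
  have "cinner x (M *v y) = (\<Sum>i\<in>UNIV. \<Sum>j\<in>UNIV. cnj (x$i) * M$i$j * y$j)"
    by (simp add: cinner_def matrix_vector_mult_def sum_distrib_left mult.assoc)
  also have "\<dots> = (\<Sum>j\<in>UNIV. \<Sum>i\<in>UNIV. cnj (x$i) * M$i$j * y$j)"
    by (rule sum.swap)
  also have "\<dots> = cinner (adjoint_mat M *v x) y"
    by (simp add: cinner_def matrix_vector_mult_def adjoint_mat_def sum_distrib_right
        sum_distrib_left mult.commute mult.left_commute)
  finally show ?thesis .
qed

lemma hermitian_cinner: "hermitian_mat A \<Longrightarrow> cinner x (A *v y) = cinner (A *v x) y"
  by (simp add: cinner_adjoint hermitian_mat_def)

lemma hermitian_inner: "hermitian_mat A \<Longrightarrow> inner x (A *v y) = inner (A *v x) y"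
  by (simp add: inner_conv_cinner hermitian_cinner)

lemma hermitian_mat_entry: "hermitian_mat A \<Longrightarrow> cnj (A $ j $ i) = A $ i $ j"
  unfolding hermitian_mat_def adjoint_mat_def by (metis vec_lambda_beta)

lemma adjoint_mult_vector_nth: "(adjoint_mat U *v x) $ i = cinner (column i U) x"
  by (simp add: adjoint_mat_def matrix_vector_mult_def cinner_def column_def)

lemma unitary_parseval:
  assumes "unitary_mat U"
  shows "(\<Sum>i\<in>UNIV. (cmod (cinner (column i U) x))\<^sup>2) = (norm x)\<^sup>2"
proof -
  define z where "z = adjoint_mat U *v x"
  have "of_real ((norm z)\<^sup>2) = cinner z z" by (simp add: cinner_self)
  also have "\<dots> = cinner x (U *v z)" by (simp add: cinner_adjoint z_def)
  also have "\<dots> = cinner x x"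
    using assms by (simp add: z_def matrix_vector_mul_assoc unitary_mat_def)
  also have "\<dots> = of_real ((norm x)\<^sup>2)" by (simp add: cinner_self)
  finally have "(norm z)\<^sup>2 = (norm x)\<^sup>2" by (simp only: of_real_eq_iff)
  then show ?thesis
    by (simp add: norm_vec_def L2_set_def sum_nonneg z_def adjoint_mult_vector_nth)
qed

lemma unitary_columns_orthonormal:
  assumes "unitary_mat U"
  shows "cinner (column i U) (column j U) = (if i = j then 1 else 0)"
proof -
  have "cinner (column i U) (column j U) = (adjoint_mat U ** U) $ i $ j"
    by (simp add: adjoint_mat_def matrix_matrix_mult_def cinner_def column_def)
  then show ?thesis using assms by (simp add: unitary_mat_def mat_def)
qed

lemma norm_column_unitary:
  assumes "unitary_mat U"
  shows "norm (column i U) = 1"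
proof -
  have "(norm (column i U))\<^sup>2 = 1"
    using unitary_columns_orthonormal[OF assms, of i i] cinner_self[of "column i U"]
    by (metis of_real_eq_1_iff)
  then show ?thesis using norm_ge_zero[of "column i U"] by (auto simp: power2_eq_1_iff)
qed

section \<open>Spectral theorem for Hermitian matrices\<close>

lemma exists_nonzero_cinner_orthogonal:
  fixes S :: "(complex^'n) set"
  assumes "finite S" "card S < CARD('n)"
  obtains y where "y \<noteq> 0" "\<forall>s\<in>S. cinner s y = 0"
proof -
  \<comment> \<open>Real orthogonality to both \<open>s\<close> and \<open>\<i> s\<close> is complex orthogonality to \<open>s\<close>.\<close>
  let ?T = "S \<union> (\<lambda>s. \<i> *s s) ` S"
  have "dim ?T \<le> card ?T" by (rule dim_le_card') (use assms(1) in blast)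
  also have "card ?T \<le> card S + card ((\<lambda>s. \<i> *s s) ` S)" by (rule card_Un_le)
  also have "\<dots> \<le> card S + card S" by (rule add_left_mono[OF card_image_le[OF assms(1)]])
  also have "\<dots> < DIM(complex^'n)" using assms(2) by simp
  finally obtain y where y: "y \<noteq> 0" "\<And>z. z \<in> span ?T \<Longrightarrow> orthogonal y z"
    using orthogonal_to_subspace_exists by metis
  have "cinner s y = 0" if "s \<in> S" for s
  proof -
    have "Re (cinner y s) = 0" "Re (cinner y (\<i> *s s)) = 0"
      using y(2) that by (auto simp: orthogonal_def inner_conv_cinner span_base)
    then have "cinner y s = 0" by (simp add: cinner_smult_right complex_eq_iff)
    then show ?thesis by (metis cnj_cinner complex_cnj_zero)
  qed
  then show ?thesis using y(1) that by blast
qed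

lemma nonneg_eq_0_if_le_all_multiples:
  fixes a C :: real
  assumes "0 \<le> a" "\<And>t. 0 < t \<Longrightarrow> a \<le> t * C"
  shows "a = 0"
proof (cases "C \<le> 0")
  case True
  then show ?thesis using assms(1) assms(2)[of 1] by simp
next
  case False
  show ?thesis
  proof (rule ccontr)
    assume "a \<noteq> 0"
    then have "0 < a / (2 * C)" using assms(1) False by simp
    then have "a \<le> a / 2" using assms(2) False by fastforce
    then show False using assms(1) \<open>a \<noteq> 0\<close> by simp
  qed
qed

lemma hermitian_maximizer_is_eigenvector:
  fixes A :: "complex^'n^'n"
  assumes herm: "hermitian_mat A" and sub: "subspace V"
    and inv: "\<And>x. x \<in> V \<Longrightarrow> A *v x \<in> V"
    and xV: "x \<in> V" and xx: "inner x x = 1"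
    and max: "\<And>z. z \<in> V \<Longrightarrow> inner z (A *v z) \<le> inner x (A *v x) * inner z z"
  shows "A *v x = inner x (A *v x) *\<^sub>R x"
proof -
  define l where "l = inner x (A *v x)"
  define w where "w = A *v x - l *\<^sub>R x"
  have wV: "w \<in> V"
    unfolding w_def by (intro subspace_diff[OF sub] inv xV subspace_scale[OF sub])
  have wx: "inner w x = 0"
    using xx by (simp add: w_def l_def inner_diff_left inner_commute[of "A *v x" x])
  have Aw: "inner x (A *v w) = inner w w" "inner w (A *v x) = inner w w"
    using wx hermitian_inner[OF herm, of x w]
    by (simp_all add: w_def inner_diff_left inner_diff_right inner_commute)
  \<comment> \<open>Second-order variation of the Rayleigh quotient in the direction \<open>w\<close>.\<close>
  have "2 * inner w w \<le> t * (l * inner w w - inner w (A *v w))" if "t > 0" for t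
  proof -
    have "inner (x + t *\<^sub>R w) (A *v (x + t *\<^sub>R w)) \<le> l * inner (x + t *\<^sub>R w) (x + t *\<^sub>R w)"
      using max[of "x + t *\<^sub>R w"] xV wV sub by (simp add: l_def subspace_add subspace_scale)
    then have "l + 2 * t * inner w w + t\<^sup>2 * inner w (A *v w) \<le> l * (1 + t\<^sup>2 * inner w w)"
      using Aw xx wx
      by (simp add: matrix_vector_right_distrib linear_simps(5)[OF matrix_vector_mul_bounded_linear]
          inner_add_left inner_add_right inner_commute l_def power2_eq_square algebra_simps)
    then have "t * (2 * inner w w) \<le> t * (t * (l * inner w w - inner w (A *v w)))"
      by (simp add: power2_eq_square algebra_simps)
    then show ?thesis using that by (simp add: mult_le_cancel_left_pos)
  qed
  then have "2 * inner w w = 0"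
    by (intro nonneg_eq_0_if_le_all_multiples) auto
  then show ?thesis by (simp add: w_def l_def)
qed

lemma hermitian_invariant_subspace_has_eigenvector:
  fixes A :: "complex^'n^'n"
  assumes herm: "hermitian_mat A" and sub: "subspace V"
    and inv: "\<And>x. x \<in> V \<Longrightarrow> A *v x \<in> V"
    and y: "y \<in> V" "y \<noteq> 0"
  obtains x l where "x \<in> V" "norm x = 1" "A *v x = l *\<^sub>R x"
proof -
  define q where "q x = inner x (A *v x)" for x
  define K where "K = V \<inter> sphere 0 1"
  have "compact K"
    unfolding K_def using closed_Int_compact[OF closed_subspace[OF sub] compact_sphere] by simp
  moreover have "(1 / norm y) *\<^sub>R y \<in> K"
    unfolding K_def using y sub by (simp add: subspace_scale)
  moreover have "continuous_on K q"
    unfolding q_def by (intro continuous_intros linear_continuous_on matrix_vector_mul_bounded_linear)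
  ultimately obtain x where xK: "x \<in> K" and xmax: "\<And>z. z \<in> K \<Longrightarrow> q z \<le> q x"
    using continuous_attains_sup[of K q] by blast
  have xV: "x \<in> V" and nx: "norm x = 1" using xK by (auto simp: K_def)
  have "q z \<le> q x * inner z z" if "z \<in> V" for z
  proof (cases "z = 0")
    case True
    then show ?thesis by (simp add: q_def)
  next
    case False
    have "(1 / norm z) *\<^sub>R z \<in> K" using that False sub by (simp add: K_def subspace_scale)
    then have "q ((1 / norm z) *\<^sub>R z) \<le> q x" by (rule xmax)
    then have "q z / (norm z * norm z) \<le> q x"
      by (simp add: q_def linear_simps(5)[OF matrix_vector_mul_bounded_linear])
    then show ?thesis
      using False by (simp add: divide_le_eq power2_norm_eq_inner[symmetric] power2_eq_square)
  qed
  then have "A *v x = q x *\<^sub>R x"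
    using hermitian_maximizer_is_eigenvector[OF herm sub inv xV] nx
    by (simp add: q_def power2_norm_eq_inner[symmetric])
  then show ?thesis using that xV nx by blast
qed

lemma hermitian_orthonormal_eigenvectors:
  fixes A :: "complex^'n^'n"
  assumes herm: "hermitian_mat A" and "k \<le> CARD('n)"
  shows "\<exists>S. finite S \<and> card S = k \<and>
           (\<forall>s\<in>S. \<forall>t\<in>S. cinner s t = (if s = t then 1 else 0)) \<and>
           (\<forall>s\<in>S. \<exists>l::real. A *v s = l *\<^sub>R s)"
  using assms(2)
proof (induction k)
  case 0
  show ?case by (intro exI[of _ "{}"]) simp
next
  case (Suc k)
  then obtain S where S: "finite S" "card S = k"
      "\<forall>s\<in>S. \<forall>t\<in>S. cinner s t = (if s = t then 1 else 0)"
      "\<forall>s\<in>S. \<exists>l::real. A *v s = l *\<^sub>R s"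
    by (meson Suc_leD)
  obtain y where y: "y \<noteq> 0" "\<forall>s\<in>S. cinner s y = 0"
    using exists_nonzero_cinner_orthogonal[OF S(1)] Suc.prems S(2) by auto
  define V where "V = {x. \<forall>s\<in>S. cinner s x = 0}"
  have sub: "subspace V"
    unfolding subspace_def V_def by (simp add: cinner_add_right cinner_scaleR_right)
  have "A *v x \<in> V" if "x \<in> V" for x
    using that S(4) hermitian_cinner[OF herm]
    by (fastforce simp: V_def cinner_scaleR_left)
  then obtain x l where x: "x \<in> V" "norm x = 1" "A *v x = l *\<^sub>R x"
    using hermitian_invariant_subspace_has_eigenvector[OF herm sub] y V_def by blast
  have xx: "cinner x x = 1" using x(2) by (simp add: cinner_self)
  have "cinner s x = 0" "cinner x s = 0" if "s \<in> S" for s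
    using x(1) that by (auto simp: V_def) (metis cnj_cinner complex_cnj_zero)
  moreover have "x \<notin> S" using x(1) xx by (auto simp: V_def)
  ultimately show ?case
    using S xx x(3) by (intro exI[of _ "insert x S"]) auto
qed

theorem hermitian_spectral_decomposition:
  fixes A :: "complex^'n^'n"
  assumes herm: "hermitian_mat A"
  obtains U ev where "unitary_mat U" "A = U ** diag_mat ev ** adjoint_mat U"
proof -
  obtain S where S: "finite S" "card S = CARD('n)"
      "\<forall>s\<in>S. \<forall>t\<in>S. cinner s t = (if s = t then 1 else 0)"
      "\<forall>s\<in>S. \<exists>l::real. A *v s = l *\<^sub>R s"
    using hermitian_orthonormal_eigenvectors[OF herm, of "CARD('n)"] by auto
  obtain g where g: "bij_betw g (UNIV::'n set) S"
    using finite_same_card_bij[of "UNIV::'n set" S] S by auto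
  have gS: "g j \<in> S" for j using g bij_betwE by blast
  have orth: "cinner (g j) (g k) = (if j = k then 1 else 0)" for j k
    using S(3) gS g by (metis bij_betw_imp_inj_on injD)
  define ev where "ev j = (SOME l::real. A *v g j = l *\<^sub>R g j)" for j
  have ev: "A *v g j = ev j *\<^sub>R g j" for j
    unfolding ev_def by (rule someI_ex) (use S(4) gS in blast)
  define U :: "complex^'n^'n" where "U = (\<chi> i j. g j $ i)"
  have UhU: "adjoint_mat U ** U = mat 1"
    by (simp add: vec_eq_iff adjoint_mat_def U_def matrix_matrix_mult_def mat_def
        orth[unfolded cinner_def])
  then have UUh: "U ** adjoint_mat U = mat 1" using matrix_left_right_inverse by blast
  have "A ** U = U ** diag_mat ev"
    using ev by (simp add: vec_eq_iff matrix_matrix_mult_def matrix_vector_mult_def U_def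
        diag_mat_def vector_scaleR_component_of_real if_distrib mult.commute
        del: vector_scaleR_component cong: if_cong)
  then have "A = U ** diag_mat ev ** adjoint_mat U"
    by (metis UUh matrix_mul_assoc matrix_mul_rid)
  then show ?thesis using that UhU UUh unitary_mat_def by blast
qed

section \<open>Concavity of the von Neumann entropy\<close>

lemma trace_unitary_diag:
  assumes "unitary_mat U"
  shows "trace (U ** diag_mat d ** adjoint_mat U) = of_real (\<Sum>i\<in>UNIV. d i)"
proof -
  have "trace (U ** diag_mat d ** adjoint_mat U) = trace ((adjoint_mat U ** U) ** diag_mat d)"
    by (simp add: trace_mul_sym[of "U ** diag_mat d"] matrix_mul_assoc)
  also have "\<dots> = of_real (\<Sum>i\<in>UNIV. d i)"
    using assms by (simp add: unitary_mat_def trace_def diag_mat_def)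
  finally show ?thesis .
qed

lemma mat_fun_spectral:
  assumes "hermitian_mat A"
  obtains U ev where "unitary_mat U" "A = U ** diag_mat ev ** adjoint_mat U"
    "\<And>f. mat_fun f A = U ** diag_mat (f \<circ> ev) ** adjoint_mat U"
proof -
  \<comment> \<open>\<open>mat_fun\<close> picks some decomposition by \<open>SOME\<close>; we return exactly that one.\<close>
  define P where "P = (\<lambda>(U, ev). unitary_mat U \<and> A = U ** diag_mat ev ** adjoint_mat U)"
  obtain U ev where "unitary_mat U" "A = U ** diag_mat ev ** adjoint_mat U"
    using hermitian_spectral_decomposition[OF assms] .
  then have "P (U, ev)" by (simp add: P_def)
  define p where "p = (SOME p. P p)"
  have "P p" unfolding p_def by (rule someI) fact
  moreover have "mat_fun f A = fst p ** diag_mat (f \<circ> snd p) ** adjoint_mat (fst p)" for f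
    by (simp add: mat_fun_def P_def[symmetric] p_def[symmetric] case_prod_beta)
  ultimately show ?thesis
    using that unfolding P_def case_prod_beta by blast
qed

lemma vN_S_spectral:
  assumes "hermitian_mat A"
  obtains U ev where "unitary_mat U" "A = U ** diag_mat ev ** adjoint_mat U"
    "vN_S A = - (\<Sum>i\<in>UNIV. ev i * ln (ev i))"
proof -
  obtain U ev where "unitary_mat U" "A = U ** diag_mat ev ** adjoint_mat U"
    "mat_fun (\<lambda>x. x * ln x) A = U ** diag_mat ((\<lambda>x. x * ln x) \<circ> ev) ** adjoint_mat U"
    using mat_fun_spectral[OF assms] by metis
  then show ?thesis
    using that by (simp add: vN_S_def trace_unitary_diag)
qed

definition quad_form :: "complex^'n^'n \<Rightarrow> complex^'n \<Rightarrow> real"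
  where "quad_form A x = Re (cinner x (A *v x))"

lemma psd_mat_iff_quad_form: "psd_mat A \<longleftrightarrow> hermitian_mat A \<and> (\<forall>x. 0 \<le> quad_form A x)"
  by (simp add: psd_mat_def quad_form_def cinner_def)

lemma scaleR_matrix_vector_mult:
  "(r *\<^sub>R (M::'a::real_algebra_1^'n^'m)) *v x = r *\<^sub>R (M *v x)"
  by (simp add: vec_eq_iff matrix_vector_mult_def scaleR_sum_right)

lemma quad_form_combination:
  "quad_form (u *\<^sub>R A + v *\<^sub>R B) x = u * quad_form A x + v * quad_form B x"
  by (simp add: quad_form_def matrix_vector_mult_add_rdistrib cinner_add_right
      cinner_scaleR_right scaleR_matrix_vector_mult)

lemma diag_mat_mult_vector_nth: "(diag_mat d *v z) $ k = of_real (d k) * z $ k"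
  by (simp add: diag_mat_def matrix_vector_mult_def if_distrib[of "\<lambda>x. x * _"] cong: if_cong)

lemma quad_form_spectral:
  assumes "A = U ** diag_mat d ** adjoint_mat U"
  shows "quad_form A x = (\<Sum>k\<in>UNIV. d k * (cmod (cinner (column k U) x))\<^sup>2)"
proof -
  define z where "z = adjoint_mat U *v x"
  have "cinner x (A *v x) = cinner z (diag_mat d *v z)"
    by (simp add: assms z_def cinner_adjoint flip: matrix_vector_mul_assoc)
  also have "\<dots> = (\<Sum>k\<in>UNIV. of_real (d k) * (z $ k * cnj (z $ k)))"
    by (simp add: cinner_def diag_mat_mult_vector_nth mult.commute mult.left_commute)
  also have "\<dots> = (\<Sum>k\<in>UNIV. of_real (d k * (cmod (z $ k))\<^sup>2))"
    by (simp add: complex_norm_square[symmetric])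
  finally show ?thesis
    by (simp add: quad_form_def z_def adjoint_mult_vector_nth)
qed

lemma quad_form_unitary_column:
  assumes "unitary_mat U" "A = U ** diag_mat d ** adjoint_mat U"
  shows "quad_form A (column i U) = d i"
  by (simp add: quad_form_spectral[OF assms(2)] unitary_columns_orthonormal[OF assms(1)]
      if_distrib[of cmod] if_distrib[of "\<lambda>x. x\<^sup>2"] if_distrib[of "(*) _"] cong: if_cong)

lemma psd_eigenvalues_nonneg:
  assumes "psd_mat A" "unitary_mat U" "A = U ** diag_mat d ** adjoint_mat U"
  shows "0 \<le> d i"
  using assms quad_form_unitary_column[OF assms(2,3)] psd_mat_iff_quad_form by metis

lemma sum_xlnx_diagonal_le_eigenvalues:
  assumes psd: "psd_mat A" and U: "unitary_mat U" and A: "A = U ** diag_mat d ** adjoint_mat U"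
    and V: "unitary_mat V"
  shows "(\<Sum>j\<in>UNIV. quad_form A (column j V) * ln (quad_form A (column j V)))
           \<le> (\<Sum>i\<in>UNIV. d i * ln (d i))"
proof -
  \<comment> \<open>The diagonal of \<open>A\<close> in the basis \<open>V\<close> arises from its eigenvalues through the doubly
      stochastic matrix \<open>M\<close>; apply Jensen's inequality column by column.\<close>
  define M where "M i j = (cmod (cinner (column i U) (column j V)))\<^sup>2" for i j
  have d: "0 \<le> d i" for i by (rule psd_eigenvalues_nonneg[OF psd U A])
  have diag: "quad_form A (column j V) = (\<Sum>i\<in>UNIV. M i j * d i)" for j
    by (simp add: quad_form_spectral[OF A] M_def mult.commute)
  have col: "(\<Sum>i\<in>UNIV. M i j) = 1" for j
    using unitary_parseval[OF U, of "column j V"] by (simp add: M_def norm_column_unitary[OF V])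
  have row: "(\<Sum>j\<in>UNIV. M i j) = 1" for i
  proof -
    have "M i j = (cmod (cinner (column j V) (column i U)))\<^sup>2" for j
      by (metis M_def cnj_cinner complex_mod_cnj)
    then show ?thesis
      using unitary_parseval[OF V, of "column i U"] by (simp add: norm_column_unitary[OF U])
  qed
  have "quad_form A (column j V) * ln (quad_form A (column j V))
          \<le> (\<Sum>i\<in>UNIV. M i j * (d i * ln (d i)))" for j
    using convex_on_sum[OF finite_class.finite_UNIV UNIV_not_empty convex_on_xlnx col, where y = d] d
    by (simp add: diag M_def)
  then have "(\<Sum>j\<in>UNIV. quad_form A (column j V) * ln (quad_form A (column j V)))
               \<le> (\<Sum>j\<in>UNIV. \<Sum>i\<in>UNIV. M i j * (d i * ln (d i)))"
    by (rule sum_mono)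
  also have "\<dots> = (\<Sum>i\<in>UNIV. (\<Sum>j\<in>UNIV. M i j) * (d i * ln (d i)))"
    by (subst sum.swap) (simp add: sum_distrib_right)
  also have "\<dots> = (\<Sum>i\<in>UNIV. d i * ln (d i))" by (simp add: row)
  finally show ?thesis .
qed

lemma hermitian_combination:
  assumes "hermitian_mat A" "hermitian_mat B"
  shows "hermitian_mat (u *\<^sub>R A + v *\<^sub>R B)"
  unfolding hermitian_mat_def adjoint_mat_def
  by (simp add: vec_eq_iff hermitian_mat_entry[OF assms(1)] hermitian_mat_entry[OF assms(2)])

lemma convex_psd_mats: "convex {A. psd_mat A}"
  unfolding convex_def
  by (auto simp: psd_mat_iff_quad_form hermitian_combination quad_form_combination)

lemma vN_S_le_diagonal_entropy:
  assumes "psd_mat A" "unitary_mat V"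
  shows "vN_S A \<le> - (\<Sum>j\<in>UNIV. quad_form A (column j V) * ln (quad_form A (column j V)))"
proof -
  obtain U d where "unitary_mat U" "A = U ** diag_mat d ** adjoint_mat U"
    "vN_S A = - (\<Sum>i\<in>UNIV. d i * ln (d i))"
    using vN_S_spectral assms(1) psd_mat_def by metis
  then show ?thesis
    using sum_xlnx_diagonal_le_eigenvalues[OF assms(1) _ _ assms(2)] by simp
qed

theorem concave_on_vN_S: "concave_on {A. psd_mat A} vN_S"
  unfolding concave_on_iff
proof (intro conjI ballI allI impI)
  show "convex {A. psd_mat A}" by (rule convex_psd_mats)
  fix \<sigma> \<tau> :: "complex^'n^'n" and u v :: real
  assume \<sigma>: "\<sigma> \<in> {A. psd_mat A}" and \<tau>: "\<tau> \<in> {A. psd_mat A}"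
    and u: "0 \<le> u" and v: "0 \<le> v" and uv: "u + v = 1"
  define \<rho> where "\<rho> = u *\<^sub>R \<sigma> + v *\<^sub>R \<tau>"
  have "psd_mat \<rho>"
    using convex_psd_mats \<sigma> \<tau> u v uv unfolding \<rho>_def convex_def by blast
  then obtain V \<mu> where V: "unitary_mat V" "\<rho> = V ** diag_mat \<mu> ** adjoint_mat V"
      "vN_S \<rho> = - (\<Sum>j\<in>UNIV. \<mu> j * ln (\<mu> j))"
    using vN_S_spectral psd_mat_def by metis
  define s t where "s j = quad_form \<sigma> (column j V)" and "t j = quad_form \<tau> (column j V)" for j
  have "0 \<le> s j" "0 \<le> t j" for j
    using \<sigma> \<tau> by (simp_all add: s_def t_def psd_mat_iff_quad_form)
  moreover have "\<mu> j = u * s j + v * t j" for j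
    using quad_form_unitary_column[OF V(1,2)] by (simp add: \<rho>_def quad_form_combination s_def t_def)
  ultimately have "\<mu> j * ln (\<mu> j) \<le> u * (s j * ln (s j)) + v * (t j * ln (t j))" for j
    using xlnx_convex_combination u v uv by simp
  then have "(\<Sum>j\<in>UNIV. \<mu> j * ln (\<mu> j))
      \<le> (\<Sum>j\<in>UNIV. u * (s j * ln (s j)) + v * (t j * ln (t j)))"
    by (rule sum_mono)
  also have "\<dots> = u * (\<Sum>j\<in>UNIV. s j * ln (s j)) + v * (\<Sum>j\<in>UNIV. t j * ln (t j))"
    by (simp add: sum.distrib sum_distrib_left)
  also have "\<dots> \<le> u * - vN_S \<sigma> + v * - vN_S \<tau>"
    using vN_S_le_diagonal_entropy[OF _ V(1), of \<sigma>] vN_S_le_diagonal_entropy[OF _ V(1), of \<tau>]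
      \<sigma> \<tau> u v
    by (intro add_mono mult_left_mono) (simp_all add: s_def t_def)
  finally show "u * vN_S \<sigma> + v * vN_S \<tau> \<le> vN_S (u *\<^sub>R \<sigma> + v *\<^sub>R \<tau>)"
    using V(3) by (simp add: \<rho>_def)
qed

section \<open>Partial trace and the quantum part\<close>

definition kron_basis :: "complex^'b \<Rightarrow> 'r \<Rightarrow> complex^('b::finite \<times> 'r::finite)"
  where "kron_basis x r = (\<chi> p. if snd p = r then x $ fst p else 0)"

lemma sum_UNIV_prod: "(\<Sum>p\<in>UNIV. h p) = (\<Sum>b\<in>UNIV. \<Sum>r\<in>UNIV. h (b, r))"
  by (simp add: sum.cartesian_product)

lemma cinner_kron_basis:
  "cinner (kron_basis x r) (\<rho> *v kron_basis x r)
     = (\<Sum>b1\<in>UNIV. \<Sum>b2\<in>UNIV. cnj (x $ b1) * (\<rho> $ (b1, r) $ (b2, r) * x $ b2))"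
  by (simp add: cinner_def matrix_vector_mult_def kron_basis_def sum_UNIV_prod
      if_distrib[of "\<lambda>x. x * _"] if_distrib[of "\<lambda>x. _ * x"] if_distrib[of cnj] cong: if_cong)
    (simp add: sum_distrib_left)

lemma quad_form_ptrace_R:
  fixes \<rho> :: "complex^('b::finite \<times> 'r::finite)^('b \<times> 'r)"
  shows "quad_form (ptrace_R \<rho>) x = (\<Sum>r\<in>UNIV. quad_form \<rho> (kron_basis x r))"
proof -
  have "cinner x (ptrace_R \<rho> *v x)
      = (\<Sum>b1\<in>UNIV. \<Sum>b2\<in>UNIV. \<Sum>r\<in>UNIV. cnj (x $ b1) * (\<rho> $ (b1, r) $ (b2, r) * x $ b2))"
    by (simp add: cinner_def matrix_vector_mult_def ptrace_R_def sum_distrib_left sum_distrib_right)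
  also have "\<dots> = (\<Sum>r\<in>UNIV. \<Sum>b1\<in>UNIV. \<Sum>b2\<in>UNIV. cnj (x $ b1) * (\<rho> $ (b1, r) $ (b2, r) * x $ b2))"
    by (simp only: sum.swap[where A = "UNIV::'b set" and B = "UNIV::'r set"])
  finally show ?thesis by (simp add: quad_form_def cinner_kron_basis Re_sum)
qed

lemma psd_ptrace_R:
  assumes "psd_mat \<rho>"
  shows "psd_mat (ptrace_R \<rho>)"
proof -
  have herm: "hermitian_mat \<rho>" and psd: "\<And>y. 0 \<le> quad_form \<rho> y"
    using assms by (auto simp: psd_mat_iff_quad_form)
  have "hermitian_mat (ptrace_R \<rho>)"
    unfolding hermitian_mat_def adjoint_mat_def
    by (simp add: ptrace_R_def vec_eq_iff hermitian_mat_entry[OF herm])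
  then show ?thesis
    by (simp add: psd_mat_iff_quad_form quad_form_ptrace_R psd sum_nonneg)
qed

lemma linear_ptrace_R: "linear ptrace_R"
  by (rule linearI) (simp_all add: vec_eq_iff ptrace_R_def sum.distrib scaleR_sum_right)

lemma convex_density_mats: "convex density_mats"
proof -
  have "convex {\<rho>::complex^'n^'n. trace \<rho> = 1}"
    by (auto simp: convex_def trace_def sum.distrib simp flip: scaleR_sum_right scaleR_add_left)
  then show ?thesis
    unfolding density_mats_def Collect_conj_eq by (intro convex_Int convex_psd_mats)
qed

lemma convex_on_neg_vN_S_minus_I_q:
  fixes \<rho>A :: "complex^'a^'a"
  shows "convex_on {\<rho>::complex^('b::finite \<times> 'r::finite)^('b \<times> 'r). psd_mat \<rho>}
           (\<lambda>\<rho>. - vN_S \<rho> - I_q \<rho>A \<rho>)"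
proof -
  have "convex_on {\<rho>::complex^('b \<times> 'r)^('b \<times> 'r). psd_mat \<rho>} (\<lambda>\<rho>. - vN_S (ptrace_R \<rho>))"
    using convex_on_compose_linear[OF concave_on_vN_S[unfolded concave_on_def] linear_ptrace_R
        convex_psd_mats] psd_ptrace_R by blast
  then have "convex_on {\<rho>::complex^('b \<times> 'r)^('b \<times> 'r). psd_mat \<rho>}
               (\<lambda>\<rho>. - vN_S \<rho>A + - vN_S (ptrace_R \<rho>))"
    by (intro convex_on_add) (simp_all add: convex_on_const convex_psd_mats)
  then show ?thesis by (simp add: I_q_def)
qed

section \<open>The classical part\<close>

definition row_sum :: "real^'m^'n \<Rightarrow> 'n \<Rightarrow> real"
  where "row_sum P i = (\<Sum>k\<in>UNIV. P $ i $ k)"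

definition nonneg_mats :: "(real^'m^'n) set"
  where "nonneg_mats = {P. \<forall>i j. 0 \<le> P $ i $ j}"

definition entry_term :: "real \<Rightarrow> real \<Rightarrow> real \<Rightarrow> real"
  where "entry_term q a r = (if q = 0 then a * ln (a / r) else a * ln q)"

lemma convex_nonneg_mats: "convex nonneg_mats"
  unfolding convex_def nonneg_mats_def by (simp add: add_nonneg_nonneg mult_nonneg_nonneg)

lemma linear_row_sum: "linear (\<lambda>P. row_sum P i)"
  by (rule linearI) (simp_all add: row_sum_def sum.distrib sum_distrib_left)

lemma row_sum_nonneg: "P \<in> nonneg_mats \<Longrightarrow> 0 \<le> row_sum P i"
  unfolding row_sum_def nonneg_mats_def by (rule sum_nonneg) simp

lemma entry_le_row_sum: "P \<in> nonneg_mats \<Longrightarrow> P $ i $ j \<le> row_sum P i"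
  unfolding row_sum_def nonneg_mats_def by (rule member_le_sum) simp_all

lemma neg_shannon_H_minus_I_c:
  fixes P :: "real^'m^'n"
  assumes p: "\<forall>j. 0 \<le> p $ j" and P: "P \<in> nonneg_mats"
  shows "- shannon_H P - I_c p P
           = (\<Sum>i\<in>UNIV. row_sum P i * ln (row_sum P i)
                + (\<Sum>j\<in>UNIV. entry_term (p $ j) (P $ i $ j) (row_sum P i)))"
proof -
  \<comment> \<open>For \<open>q = 0\<close> the junk values \<open>a / 0 = 0\<close> and \<open>ln 0 = 0\<close> make the \<open>I_c\<close> term vanish.\<close>
  have entry: "a * ln a - a * ln (a / (q * r)) = entry_term q a r + a * ln r"
    if "0 \<le> a" "a \<le> r" "0 \<le> q" for a r q :: real
  proof (cases "a = 0 \<or> q = 0")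
    case True
    then show ?thesis using that by (auto simp: entry_term_def ln_div algebra_simps)
  next
    case False
    then show ?thesis using that by (simp add: entry_term_def ln_div ln_mult algebra_simps)
  qed
  have "I_c p P = (\<Sum>i\<in>UNIV. \<Sum>j\<in>UNIV. P $ i $ j * ln (P $ i $ j / (p $ j * row_sum P i)))"
    unfolding I_c_def row_sum_def by (subst sum.swap) (simp add: sum_distrib_left)
  then have "- shannon_H P - I_c p P = (\<Sum>i\<in>UNIV. \<Sum>j\<in>UNIV.
      P $ i $ j * ln (P $ i $ j) - P $ i $ j * ln (P $ i $ j / (p $ j * row_sum P i)))"
    by (simp add: shannon_H_def sum_subtractf)
  also have "\<dots> = (\<Sum>i\<in>UNIV. \<Sum>j\<in>UNIV.
      entry_term (p $ j) (P $ i $ j) (row_sum P i) + P $ i $ j * ln (row_sum P i))"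
    using entry P p entry_le_row_sum[OF P] by (intro sum.cong refl) (auto simp: nonneg_mats_def)
  also have "\<dots> = (\<Sum>i\<in>UNIV. row_sum P i * ln (row_sum P i)
                + (\<Sum>j\<in>UNIV. entry_term (p $ j) (P $ i $ j) (row_sum P i)))"
    by (simp add: sum.distrib row_sum_def sum_distrib_right)
  finally show ?thesis .
qed

lemma convex_on_entry_term:
  "convex_on nonneg_mats (\<lambda>P::real^'m^'n. entry_term q (P $ i $ j) (row_sum P i))"
proof (cases "q = 0")
  case True
  have "linear (\<lambda>P::real^'m^'n. (P $ i $ j, row_sum P i))"
    by (rule linearI) (simp_all add: row_sum_def sum.distrib sum_distrib_left)
  then have "convex_on nonneg_mats
               (\<lambda>P::real^'m^'n. (\<lambda>(a, b). a * ln (a / b)) (P $ i $ j, row_sum P i))"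
    by (rule convex_on_compose_linear[OF convex_on_relative_entropy_term _ convex_nonneg_mats])
      (auto simp: entry_le_row_sum, simp add: nonneg_mats_def)
  then show ?thesis using True by (simp add: entry_term_def)
next
  case False
  have "linear (\<lambda>P::real^'m^'n. P $ i $ j * ln q)"
    by (rule linearI) (simp_all add: algebra_simps)
  then have "convex_on nonneg_mats (\<lambda>P::real^'m^'n. P $ i $ j * ln q)"
    using convex_nonneg_mats by (rule convex_on_linear)
  then show ?thesis using False by (simp add: entry_term_def)
qed

lemma convex_on_neg_shannon_H_minus_I_c:
  fixes p :: "real^'m"
  assumes "\<forall>j. 0 \<le> p $ j"
  shows "convex_on nonneg_mats (\<lambda>P::real^'m^'n. - shannon_H P - I_c p P)"
proof -
  have "convex_on nonneg_mats (\<lambda>P::real^'m^'n. row_sum P i * ln (row_sum P i))" for i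
    by (rule convex_on_compose_linear[OF convex_on_xlnx linear_row_sum convex_nonneg_mats])
      (auto simp: row_sum_nonneg)
  then have "convex_on nonneg_mats (\<lambda>P::real^'m^'n. \<Sum>i\<in>UNIV. row_sum P i * ln (row_sum P i)
               + (\<Sum>j\<in>UNIV. entry_term (p $ j) (P $ i $ j) (row_sum P i)))"
    by (intro convex_on_finite_sum convex_on_add convex_on_entry_term convex_nonneg_mats
        finite_class.finite_UNIV)
  then show ?thesis
    by (simp only: convex_on_cong[OF refl neg_shannon_H_minus_I_c[OF assms]])
qed

lemma convex_mat_simplex: "convex mat_simplex"
  unfolding convex_def mat_simplex_def
  by (auto simp: sum.distrib simp flip: sum_distrib_left)

theorem mainTheorem8:
  shows "(\<forall>p::real^'m. p \<in> prob_simplex \<longrightarrow>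
            rel_smooth 1 (I_c p) (\<lambda>P::real^'m^'n. - shannon_H P) mat_simplex)
       \<and> (\<forall>\<rho>A::complex^'a^'a. \<rho>A \<in> density_mats \<longrightarrow>
            rel_smooth 1 (I_q \<rho>A) (\<lambda>\<rho>::complex^('b::finite \<times> 'r::finite)^('b \<times> 'r). - vN_S \<rho>)
              density_mats)"
proof (intro conjI allI impI)
  fix p :: "real^'m"
  assume "p \<in> prob_simplex"
  then have "\<forall>j. 0 \<le> p $ j" by (simp add: prob_simplex_def)
  then have "convex_on nonneg_mats (\<lambda>P::real^'m^'n. 1 * - shannon_H P - I_c p P)"
    by (simp add: convex_on_neg_shannon_H_minus_I_c)
  then show "rel_smooth 1 (I_c p) (\<lambda>P::real^'m^'n. - shannon_H P) mat_simplex"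
    by (rule rel_smooth_if_convex_on[OF _ _ convex_mat_simplex])
      (auto simp: mat_simplex_def nonneg_mats_def)
next
  fix \<rho>A :: "complex^'a^'a"
  have "convex_on {\<rho>::complex^('b \<times> 'r)^('b \<times> 'r). psd_mat \<rho>} (\<lambda>\<rho>. 1 * - vN_S \<rho> - I_q \<rho>A \<rho>)"
    using convex_on_neg_vN_S_minus_I_q by simp
  then show "rel_smooth 1 (I_q \<rho>A) (\<lambda>\<rho>::complex^('b \<times> 'r)^('b \<times> 'r). - vN_S \<rho>) density_mats"
    by (rule rel_smooth_if_convex_on[OF _ _ convex_density_mats]) (auto simp: density_mats_def)
qed

end
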